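(* For every $\epsilon\in(0,1)$ there exist an expander graph $\mathcal{G}=(\mathcal{V},\mathcal{E})$ and two vertices $s,t\in\mathcal{V}$ such that any (possibly randomized) algorithm in the adjacency query model that outputs $\hat r_{\mathcal{G}}(s,t)$ with $\hat r_{\mathcal{G}}(s,t)\approx_\epsilon r_{\mathcal{G}}(s,t)$ with success probability at least $2/3$ must make $\Omega(1/\epsilon)$ queries.
   Context: $r_{\mathcal{G}}(s,t)=(\mathbf{e}_s-\mathbf{e}_t)^T\mathbf{L}^\dagger(\mathbf{e}_s-\mathbf{e}_t)$ with $\mathbf{L}=\mathbf{D}-\mathbf{A}$ the graph Laplacian. $x\approx_\epsilon y$ means $(1-\epsilon)y\le x\le(1+\epsilon)y$. Adjacency query model: in constant time one can query the degree of any vertex, the $i$-th neighbor of any vertex, and a uniformly random vertex. A graph is an expander if its conductance $\phi_{\mathcal{G}}=\min_{S\subset\mathcal{V}}\frac{|\{(u,v)\in\mathcal{E}:u\in S,v\notin S\}|}{\min\{\sum_{u\in S}d_u,\sum_{u\notin S}d_u\}}$ is $\tilde\Omega(1)$. *)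

theory Defs
  imports "HOL-Probability.Probability" "Jordan_Normal_Form.Matrix"
begin

text \<open>Undirected simple graphs on vertex set {0..<nv G}, given by adjacency lists
  (the i-th neighbour of v is adj G v ! i).\<close>
record graph =
  nv  :: nat
  adj :: "nat \<Rightarrow> nat list"

definition valid_graph :: "graph \<Rightarrow> bool" where
  "valid_graph G \<longleftrightarrow> (\<forall>v < nv G. distinct (adj G v) \<and> v \<notin> set (adj G v) \<and>
      set (adj G v) \<subseteq> {..<nv G} \<and>
      (\<forall>u < nv G. u \<in> set (adj G v) \<longleftrightarrow> v \<in> set (adj G u)))"

definition deg :: "graph \<Rightarrow> nat \<Rightarrow> nat" where
  "deg G v = (if v < nv G then length (adj G v) else 0)"

definition nbr :: "graph \<Rightarrow> nat \<Rightarrow> nat \<Rightarrow> nat option" where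
  "nbr G v i = (if v < nv G \<and> i < deg G v then Some (adj G v ! i) else None)"

text \<open>Randomized algorithms in the adjacency query model, as (well-founded) decision trees:
  output a value, flip a fair coin (free), or make one of the three queries
  (degree, i-th neighbour, uniformly random vertex), each costing one query.\<close>
datatype qalg =
    Output real
  | Coin "bool \<Rightarrow> qalg"
  | QDeg nat "nat \<Rightarrow> qalg"
  | QNbr nat nat "nat option \<Rightarrow> qalg"
  | QRand "nat \<Rightarrow> qalg"

text \<open>Output distribution of running an algorithm on G with a budget of k queries;
  None means the budget was exceeded (counted as failure).\<close>
primrec run :: "graph \<Rightarrow> qalg \<Rightarrow> nat \<Rightarrow> real option pmf" where
  "run G (Output r) k = return_pmf (Some r)"
| "run G (Coin f) k = bind_pmf (bernoulli_pmf (1/2)) (\<lambda>b. run G (f b) k)"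
| "run G (QDeg v f) k = (if k = 0 then return_pmf None else run G (f (deg G v)) (k - 1))"
| "run G (QNbr v i f) k = (if k = 0 then return_pmf None else run G (f (nbr G v i)) (k - 1))"
| "run G (QRand f) k = (if k = 0 then return_pmf None
      else bind_pmf (pmf_of_set {..<nv G}) (\<lambda>u. run G (f u) (k - 1)))"

definition laplacian :: "graph \<Rightarrow> real mat" where
  "laplacian G = mat (nv G) (nv G)
     (\<lambda>(i, j). if i = j then real (deg G i) else if j \<in> set (adj G i) then -1 else 0)"

definition is_pinv :: "real mat \<Rightarrow> real mat \<Rightarrow> bool" where
  "is_pinv L M \<longleftrightarrow> M \<in> carrier_mat (dim_col L) (dim_row L) \<and>
     L * M * L = L \<and> M * L * M = M \<and>
     transpose_mat (L * M) = L * M \<and> transpose_mat (M * L) = M * L"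

definition pinv :: "real mat \<Rightarrow> real mat" where
  "pinv L = (THE M. is_pinv L M)"

definition eff_res :: "graph \<Rightarrow> nat \<Rightarrow> nat \<Rightarrow> real" where
  "eff_res G s t = (let x = unit_vec (nv G) s - unit_vec (nv G) t
                    in x \<bullet> (pinv (laplacian G) *\<^sub>v x))"

definition approx_eq :: "real \<Rightarrow> real \<Rightarrow> real \<Rightarrow> bool" where
  "approx_eq \<epsilon> x y \<longleftrightarrow> (1 - \<epsilon>) * y \<le> x \<and> x \<le> (1 + \<epsilon>) * y"

definition cut_size :: "graph \<Rightarrow> nat set \<Rightarrow> nat" where
  "cut_size G S = card {(u, v). u \<in> S \<and> v \<in> {..<nv G} - S \<and> v \<in> set (adj G u)}"

definition vol :: "graph \<Rightarrow> nat set \<Rightarrow> real" where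
  "vol G S = (\<Sum>u\<in>S. real (deg G u))"

definition conductance :: "graph \<Rightarrow> real" where
  "conductance G = Min {real (cut_size G S) / min (vol G S) (vol G ({..<nv G} - S)) | S.
      S \<subseteq> {..<nv G} \<and> S \<noteq> {} \<and> S \<noteq> {..<nv G}}"

definition expander :: "real \<Rightarrow> graph \<Rightarrow> bool" where
  "expander c G \<longleftrightarrow> 2 \<le> nv G \<and> c \<le> conductance G"

definition success_prob :: "qalg \<Rightarrow> graph \<Rightarrow> nat \<Rightarrow> nat \<Rightarrow> real \<Rightarrow> nat \<Rightarrow> real" where
  "success_prob A G s t \<epsilon> k =
     measure_pmf.prob (run G A k) {Some r | r. approx_eq \<epsilon> r (eff_res G s t)}"

end

theory Submission
  imports Defs
begin

text \<open>
  The hard instances have n vertices, n even. The cocktail party graph of a perfect matching p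
  (the complete graph minus p) is an expander, and the effective resistance between 0 and 1 is
  2 / (n - 2) if p matches 0 with 1, and 1 - 1/n times that otherwise. Rematching 0 with 2j and
  1 with 2j + 1 changes only the answers to neighbour queries in a set depending on j, and these
  sets are pairwise disjoint for j = 1, ..., 3q + 1. An algorithm with q queries therefore hits
  one of them with probability at most q / (3q + 1) < 1/3, so by coupling it behaves almost
  identically on two graphs whose resistances differ by the factor 1 - 1/n; for n = 6q + 4 this
  forces epsilon to be of order 1/q. An algorithm without queries sees only n, and a star, where
  two leaves are at resistance 2, defeats it for every epsilon < 1.
\<close>

section \<open>Coupling of query algorithms\<close>

lemma measure_pmf_prob_bind:
  "measure_pmf.prob (bind_pmf M f) X = measure_pmf.expectation M (\<lambda>x. measure_pmf.prob (f x) X)"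
  unfolding measure_pmf_bind
  by (rule measure_pmf.measure_bind[where N="count_space UNIV"])
     (auto simp: space_subprob_algebra prob_space_imp_subprob_space measure_pmf.prob_space_axioms
           intro!: measure_pmf_in_subprob_algebra)

lemma prob_run_Coin:
  "measure_pmf.prob (run G (Coin f) k) X =
     (measure_pmf.prob (run G (f True) k) X + measure_pmf.prob (run G (f False) k) X) / 2"
  by (simp add: measure_pmf_prob_bind integral_bernoulli_pmf)

lemma prob_run_QRand:
  assumes "0 < nv G" "0 < k"
  shows "measure_pmf.prob (run G (QRand f) k) X =
     (\<Sum>u<nv G. measure_pmf.prob (run G (f u) (k - 1)) X) / real (nv G)"
proof -
  have "{..<nv G} \<noteq> {}" using assms by auto
  then show ?thesis
    using assms by (simp add: measure_pmf_prob_bind integral_pmf_of_set)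
qed

lemma abs_prob_diff_le_1: "\<bar>measure_pmf.prob p X - measure_pmf.prob q Y\<bar> \<le> 1"
  using measure_pmf.prob_le_1[of p X] measure_pmf.prob_le_1[of q Y]
    measure_nonneg[of p X] measure_nonneg[of q Y]
  by (simp only: abs_le_iff) linarith

lemma run_0_cong: "nv G = nv H \<Longrightarrow> run G A 0 = run H A 0"
  by (induction A) auto

primrec hit_prob :: "graph \<Rightarrow> (nat \<times> nat) set \<Rightarrow> qalg \<Rightarrow> nat \<Rightarrow> real" where
  "hit_prob G D (Output r) k = 0"
| "hit_prob G D (Coin f) k = (hit_prob G D (f True) k + hit_prob G D (f False) k) / 2"
| "hit_prob G D (QDeg v f) k = (if k = 0 then 0 else hit_prob G D (f (deg G v)) (k - 1))"
| "hit_prob G D (QNbr v i f) k = (if k = 0 then 0 else if (v, i) \<in> D then 1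
      else hit_prob G D (f (nbr G v i)) (k - 1))"
| "hit_prob G D (QRand f) k = (if k = 0 then 0
      else (\<Sum>u<nv G. hit_prob G D (f u) (k - 1)) / real (nv G))"

lemma hit_prob_nonneg: "0 \<le> hit_prob G D A k"
  by (induction A arbitrary: k) (auto intro!: sum_nonneg divide_nonneg_nonneg)

text \<open>An algorithm behaves identically on G and H until it asks a neighbour query in D.\<close>
lemma prob_run_diff_le_hit_prob:
  assumes nv: "nv H = nv G" "0 < nv G" and deg: "\<And>v. deg H v = deg G v"
    and nbr: "\<And>v i. (v, i) \<notin> D \<Longrightarrow> nbr H v i = nbr G v i"
  shows "\<bar>measure_pmf.prob (run G A k) X - measure_pmf.prob (run H A k) X\<bar> \<le> hit_prob G D A k"
proof (induction A arbitrary: k)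
  case (Coin f)
  let ?d = "\<lambda>b. measure_pmf.prob (run G (f b) k) X - measure_pmf.prob (run H (f b) k) X"
  have "\<bar>measure_pmf.prob (run G (Coin f) k) X - measure_pmf.prob (run H (Coin f) k) X\<bar>
      = \<bar>?d True / 2 + ?d False / 2\<bar>"
    by (simp only: prob_run_Coin) (simp add: field_simps)
  also have "\<dots> \<le> \<bar>?d True\<bar> / 2 + \<bar>?d False\<bar> / 2"
    using abs_triangle_ineq[of "?d True / 2" "?d False / 2"] by simp
  also have "\<dots> \<le> hit_prob G D (f True) k / 2 + hit_prob G D (f False) k / 2"
    by (intro add_mono divide_right_mono Coin) auto
  finally show ?case by simp
next
  case (QNbr v i f)
  then show ?case by (simp add: nbr abs_prob_diff_le_1)
next
  case (QRand f)
  show ?case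
  proof (cases "k = 0")
    case False
    let ?d = "\<lambda>u. measure_pmf.prob (run G (f u) (k - 1)) X - measure_pmf.prob (run H (f u) (k - 1)) X"
    have "\<bar>measure_pmf.prob (run G (QRand f) k) X - measure_pmf.prob (run H (QRand f) k) X\<bar>
        = \<bar>(\<Sum>u<nv G. ?d u) / real (nv G)\<bar>"
      using False nv prob_run_QRand[of G k f X] prob_run_QRand[of H k f X]
      by (simp del: run.simps add: sum_subtractf diff_divide_distrib)
    also have "\<dots> \<le> (\<Sum>u<nv G. \<bar>?d u\<bar>) / real (nv G)"
      by (simp add: divide_right_mono sum_abs)
    also have "\<dots> \<le> (\<Sum>u<nv G. hit_prob G D (f u) (k - 1)) / real (nv G)"
      by (intro divide_right_mono sum_mono QRand) auto
    finally show ?thesis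
      using False by simp
  qed simp
qed (simp_all add: deg)

text \<open>A query lies in at most one of the sets D j, so every query adds at most 1 to the sum.\<close>
lemma sum_hit_prob_le_budget:
  assumes "finite J" and disj: "\<And>x j j'. j \<in> J \<Longrightarrow> j' \<in> J \<Longrightarrow> x \<in> D j \<Longrightarrow> x \<in> D j' \<Longrightarrow> j = j'"
  shows "(\<Sum>j\<in>J. hit_prob G (D j) A k) \<le> real k"
proof (induction A arbitrary: k)
  case (Coin f)
  have "(\<Sum>j\<in>J. hit_prob G (D j) (f b) k) \<le> real k" for b
    by (rule Coin) simp
  from this[of True] this[of False] show ?case
    by (simp add: sum.distrib sum_divide_distrib[symmetric])
next
  case (QDeg v f)
  have "(\<Sum>j\<in>J. hit_prob G (D j) (f (deg G v)) (k - 1)) \<le> real (k - 1)"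
    by (rule QDeg) simp
  then show ?case by (cases k) auto
next
  case (QNbr v i f)
  show ?case
  proof (cases k)
    case (Suc k')
    have "card (J \<inter> {j. (v, i) \<in> D j}) \<le> 1"
      using disj \<open>finite J\<close> by (auto simp: card_le_Suc0_iff_eq)
    moreover have "(\<Sum>j\<in>J. hit_prob G (D j) (QNbr v i f) k)
       \<le> (\<Sum>j\<in>J. (if (v, i) \<in> D j then 1 else 0) + hit_prob G (D j) (f (nbr G v i)) k')"
      using Suc by (intro sum_mono) (auto simp: hit_prob_nonneg)
    moreover have "(\<Sum>j\<in>J. hit_prob G (D j) (f (nbr G v i)) k') \<le> real k'"
      by (rule QNbr) simp
    ultimately show ?thesis
      using Suc \<open>finite J\<close> by (simp add: sum.distrib sum.If_cases)
  qed simp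
next
  case (QRand f)
  show ?case
  proof (cases k)
    case (Suc k')
    have "(\<Sum>j\<in>J. hit_prob G (D j) (QRand f) k)
        = (\<Sum>u<nv G. \<Sum>j\<in>J. hit_prob G (D j) (f u) k') / real (nv G)"
      using Suc by (simp add: sum_divide_distrib[symmetric] sum.swap[of _ J])
    also have "\<dots> \<le> (\<Sum>u<nv G. real k') / real (nv G)"
      by (intro divide_right_mono sum_mono QRand) auto
    also have "\<dots> \<le> real k"
      using Suc by simp
    finally show ?thesis .
  qed simp
qed auto

lemma ex_le_average:
  fixes f :: "'a \<Rightarrow> real"
  assumes "finite J" "J \<noteq> {}"
  shows "\<exists>j\<in>J. f j \<le> (\<Sum>j\<in>J. f j) / card J"
proof (rule ccontr)
  assume "\<not> ?thesis"
  then have "(\<Sum>j\<in>J. (\<Sum>j\<in>J. f j) / card J) < (\<Sum>j\<in>J. f j)"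
    using assms by (intro sum_strict_mono) auto
  then show False
    using assms by simp
qed

section \<open>Pseudoinverse of the Laplacian\<close>

lemma is_pinv_unique:
  assumes L: "L \<in> carrier_mat n n" and M1: "is_pinv L M1" and M2: "is_pinv L M2"
  shows "M1 = M2"
proof -
  have M1n: "M1 \<in> carrier_mat n n" and M2n: "M2 \<in> carrier_mat n n"
    using M1 M2 L by (auto simp: is_pinv_def)
  note carriers = L M1n M2n transpose_carrier_mat
  note T = transpose_mult[of _ n n _ n]
  have p1: "L * M1 * L = L" "M1 * L * M1 = M1" "transpose_mat (L * M1) = L * M1"
    "transpose_mat (M1 * L) = M1 * L"
    using M1 by (auto simp: is_pinv_def)
  have p2: "L * M2 * L = L" "M2 * L * M2 = M2" "transpose_mat (L * M2) = L * M2"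
    "transpose_mat (M2 * L) = M2 * L"
    using M2 by (auto simp: is_pinv_def)
  have "transpose_mat L = transpose_mat (L * M2 * L)"
    using p2(1) by simp
  also have "\<dots> = transpose_mat L * (L * M2)"
    using transpose_mult[of "L * M2" n n L n] carriers p2(3) by simp
  finally have LT2: "transpose_mat L = transpose_mat L * (L * M2)" .
  have LT1: "transpose_mat L = M1 * L * transpose_mat L"
    using arg_cong[OF p1(1), of transpose_mat] carriers
    by (simp add: T p1(4) assoc_mult_mat[of L n n M1 n L n])
  have "M1 = M1 * transpose_mat M1 * transpose_mat L"
    using p1(2,3) carriers by (simp add: T assoc_mult_mat[of M1 n n L n M1 n])
  also have "\<dots> = M1 * transpose_mat (L * M1) * (L * M2)"
    using carriers by (subst LT2) (simp add: T assoc_mult_mat[of _ n n _ n _ n])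
  also have "\<dots> = M1 * L * M2"
    using p1(2,3) carriers by (simp add: assoc_mult_mat[of _ n n _ n _ n])
  finally have M1_eq: "M1 = M1 * L * M2" .
  have "M2 = transpose_mat L * transpose_mat M2 * M2"
    using p2(2,4) carriers by (simp add: T)
  also have "\<dots> = M1 * L * transpose_mat (M2 * L) * M2"
    using carriers by (subst LT1) (simp add: T assoc_mult_mat[of _ n n _ n _ n])
  also have "\<dots> = M1 * L * M2"
    using p2(2,4) carriers by (simp add: assoc_mult_mat[of _ n n _ n _ n])
  finally show ?thesis
    using M1_eq by simp
qed

lemma pinv_eq: "L \<in> carrier_mat n n \<Longrightarrow> is_pinv L M \<Longrightarrow> pinv L = M"
  unfolding pinv_def using is_pinv_unique by blast

definition centering_mat :: "nat \<Rightarrow> real mat" where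
  "centering_mat n = mat n n (\<lambda>(i, j). (if i = j then 1 else 0) - 1 / real n)"

lemma transpose_centering_mat: "transpose_mat (centering_mat n) = centering_mat n"
  unfolding centering_mat_def by (rule eq_matI) auto

lemma mat_mult_mat: "mat n n f * mat n n g = mat n n (\<lambda>(i, j). \<Sum>k<n. f (i, k) * g (k, j))"
  by (rule eq_matI) (auto simp: scalar_prod_def atLeast0LessThan row_def col_def intro!: sum.cong)

lemma centering_mat_mult:
  assumes "\<And>j. j < n \<Longrightarrow> (\<Sum>k<n. x (k, j)) = 0"
  shows "centering_mat n * mat n n x = mat n n x"
proof (rule eq_matI)
  fix i j assume ij: "i < dim_row (mat n n x)" "j < dim_col (mat n n x)"
  have "(\<Sum>k<n. (if i = k then 1 else 0) * x (k, j)) = (\<Sum>k<n. if k = i then x (i, j) else 0)"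
    by (rule sum.cong) auto
  then have "(\<Sum>k<n. ((if i = k then 1 else 0) - 1 / real n) * x (k, j))
      = x (i, j) - (\<Sum>k<n. x (k, j)) / real n"
    using ij by (simp add: left_diff_distrib sum_subtractf sum_divide_distrib)
  then show "(centering_mat n * mat n n x) $$ (i, j) = mat n n x $$ (i, j)"
    using ij assms by (simp add: centering_mat_def mat_mult_mat)
qed (auto simp: centering_mat_def)

lemma laplacian_carrier: "laplacian G \<in> carrier_mat (nv G) (nv G)"
  by (simp add: laplacian_def)

lemma transpose_laplacian: "valid_graph G \<Longrightarrow> transpose_mat (laplacian G) = laplacian G"
  unfolding laplacian_def by (intro eq_matI) (auto simp: valid_graph_def)

lemma centering_mat_mult_laplacian:
  assumes G: "valid_graph G"
  shows "centering_mat (nv G) * laplacian G = laplacian G"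
  unfolding laplacian_def
proof (rule centering_mat_mult)
  fix j assume j: "j < nv G"
  have nbrs: "set (adj G j) \<subseteq> {..<nv G}" "j \<notin> set (adj G j)" "distinct (adj G j)"
    using G j by (auto simp: valid_graph_def)
  have "(\<Sum>k<nv G. (\<lambda>(i, j). if i = j then real (deg G i) else if j \<in> set (adj G i) then - 1 else 0) (k, j))
      = (\<Sum>k<nv G. (if k = j then real (deg G j) else 0) - (if k \<in> set (adj G j) then 1 else 0))"
    using G j nbrs(2) by (intro sum.cong) (auto simp: valid_graph_def)
  also have "\<dots> = real (deg G j) - real (card (set (adj G j)))"
    using j nbrs(1) by (simp add: sum_subtractf sum.If_cases Int_absorb1)
  also have "\<dots> = 0"
    using j nbrs(3) by (simp add: deg_def distinct_card)
  finally show "(\<Sum>k<nv G. (\<lambda>(i, j). if i = j then real (deg G i) else if j \<in> set (adj G i) then - 1 else 0) (k, j)) = 0" .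
qed

lemma pinv_laplacian_eq:
  assumes G: "valid_graph G" and n: "nv G = n"
    and sym: "\<And>i j. i < n \<Longrightarrow> j < n \<Longrightarrow> m (j, i) = m (i, j)"
    and col: "\<And>j. j < n \<Longrightarrow> (\<Sum>k<n. m (k, j)) = 0"
    and inv: "laplacian G * mat n n m = centering_mat n"
  shows "pinv (laplacian G) = mat n n m"
proof (rule pinv_eq)
  let ?L = "laplacian G" and ?M = "mat n n m"
  have L: "?L \<in> carrier_mat n n"
    using laplacian_carrier n by blast
  have MT: "transpose_mat ?M = ?M"
    using sym by (intro eq_matI) auto
  have "?M * ?L = transpose_mat ?M * transpose_mat ?L"
    using MT transpose_laplacian[OF G] by simp
  also have "\<dots> = centering_mat n"
    using L inv transpose_centering_mat by (simp flip: transpose_mult[of ?L n n ?M n])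
  finally have inv_left: "?M * ?L = centering_mat n" .
  have CL: "centering_mat n * ?L = ?L"
    using centering_mat_mult_laplacian[OF G] n by simp
  have CM: "centering_mat n * ?M = ?M"
    using col by (rule centering_mat_mult)
  show "is_pinv ?L ?M"
    unfolding is_pinv_def using L inv inv_left CL CM transpose_centering_mat n by auto
qed (use laplacian_carrier n in blast)

lemma eff_res_eq_pinv_entries:
  assumes P: "pinv (laplacian G) = mat (nv G) (nv G) m" and s: "s < nv G" and t: "t < nv G"
  shows "eff_res G s t = m (s, s) - m (s, t) - m (t, s) + m (t, t)"
proof -
  let ?n = "nv G"
  define x :: "real vec" where "x = unit_vec ?n s - unit_vec ?n t"
  have x: "\<And>i. i < ?n \<Longrightarrow> vec_index x i = (if i = s then 1 else 0) - (if i = t then 1 else 0)"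
    unfolding x_def by (auto simp: unit_vec_def)
  have dim: "dim_vec x = ?n"
    unfolding x_def by simp
  have Mx: "vec_index (mat ?n ?n m *\<^sub>v x) i = m (i, s) - m (i, t)" if i: "i < ?n" for i
  proof -
    have "vec_index (mat ?n ?n m *\<^sub>v x) i = (\<Sum>k<?n. m (i, k) * vec_index x k)"
      using i dim by (simp add: scalar_prod_def atLeast0LessThan row_def)
    also have "\<dots> = (\<Sum>k<?n. (if k = s then m (i, k) else 0) - (if k = t then m (i, k) else 0))"
      by (intro sum.cong) (auto simp: x)
    finally show ?thesis
      using s t by (simp add: sum_subtractf)
  qed
  have "eff_res G s t = scalar_prod x (mat ?n ?n m *\<^sub>v x)"
    unfolding eff_res_def Let_def x_def[symmetric] P ..
  also have "\<dots> = (\<Sum>k<?n. vec_index x k * (m (k, s) - m (k, t)))"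
    unfolding scalar_prod_def
    by (auto simp: atLeast0LessThan Mx dim simp del: index_mult_mat_vec intro!: sum.cong)
  also have "\<dots> = (\<Sum>k<?n. (if k = s then m (k, s) - m (k, t) else 0)
                         - (if k = t then m (k, s) - m (k, t) else 0))"
    by (intro sum.cong) (auto simp: x)
  finally show ?thesis
    using s t by (simp add: sum_subtractf)
qed

section \<open>Conductance\<close>

lemma conductance_ge:
  assumes n: "2 \<le> nv G" and deg: "\<And>v. v < nv G \<Longrightarrow> 0 < deg G v" and "0 \<le> c"
    and cut: "\<And>S. S \<subseteq> {..<nv G} \<Longrightarrow> S \<noteq> {} \<Longrightarrow> S \<noteq> {..<nv G} \<Longrightarrow>
      c * vol G S \<le> cut_size G S \<or> c * vol G ({..<nv G} - S) \<le> cut_size G S"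
  shows "c \<le> conductance G"
  unfolding conductance_def
proof (rule Min.boundedI)
  let ?proper = "\<lambda>S. S \<subseteq> {..<nv G} \<and> S \<noteq> {} \<and> S \<noteq> {..<nv G}"
  have "finite {S. ?proper S}"
    by (rule finite_subset[of _ "Pow {..<nv G}"]) auto
  then show "finite {real (cut_size G S) / min (vol G S) (vol G ({..<nv G} - S)) | S. ?proper S}"
    by (rule finite_image_set)
  have "?proper {0}"
    using n by (auto simp: set_eq_iff intro!: exI[of _ 1])
  then show "{real (cut_size G S) / min (vol G S) (vol G ({..<nv G} - S)) | S. ?proper S} \<noteq> {}"
    by (auto simp del: insert_subset)
  have vol_pos: "0 < vol G S" if S: "S \<subseteq> {..<nv G}" "S \<noteq> {}" for S
  proof -
    have "finite S"
      using S(1) finite_subset by blast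
    moreover have "\<forall>u\<in>S. 0 < real (deg G u)"
      using S(1) deg by (auto simp: subset_iff)
    ultimately show ?thesis
      unfolding vol_def using S(2) by (simp add: sum_pos)
  qed
  have "c \<le> real (cut_size G S) / min (vol G S) (vol G ({..<nv G} - S))" if S: "?proper S" for S
  proof -
    have "0 < min (vol G S) (vol G ({..<nv G} - S))"
      using S vol_pos[of S] vol_pos[of "{..<nv G} - S"] by auto
    moreover have "c * min (vol G S) (vol G ({..<nv G} - S)) \<le> cut_size G S"
      using cut[of S] S mult_left_mono[OF min.cobounded1 \<open>0 \<le> c\<close>]
        mult_left_mono[OF min.cobounded2 \<open>0 \<le> c\<close>]
      by (meson order_trans)
    ultimately show ?thesis
      by (simp add: pos_le_divide_eq)
  qed
  then show "\<And>x. x \<in> {real (cut_size G S) / min (vol G S) (vol G ({..<nv G} - S)) | S. ?proper S}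
      \<Longrightarrow> c \<le> x"
    by blast
qed

lemma card_le_cut_size:
  assumes "S \<subseteq> {..<nv G}"
    and "A \<times> B \<subseteq> {(u, v). u \<in> S \<and> v \<in> {..<nv G} - S \<and> v \<in> set (adj G u)}"
  shows "card A * card B \<le> cut_size G S"
proof -
  have "{(u, v). u \<in> S \<and> v \<in> {..<nv G} - S \<and> v \<in> set (adj G u)} \<subseteq> {..<nv G} \<times> {..<nv G}"
    using assms(1) by auto
  then have "finite {(u, v). u \<in> S \<and> v \<in> {..<nv G} - S \<and> v \<in> set (adj G u)}"
    by (rule finite_subset) simp
  then show ?thesis
    unfolding cut_size_def using card_mono[OF _ assms(2)] by (simp add: card_cartesian_product)
qed

section \<open>Cocktail party graphs\<close>

definition perfect_matching :: "nat \<Rightarrow> (nat \<Rightarrow> nat) \<Rightarrow> bool" where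
  "perfect_matching n p \<longleftrightarrow> (\<forall>v<n. p v < n \<and> p v \<noteq> v \<and> p (p v) = v)"

definition pair_match :: "nat \<Rightarrow> nat" where
  "pair_match v = (if even v then Suc v else v - 1)"

definition rematch :: "nat \<Rightarrow> nat \<Rightarrow> nat" where
  "rematch j v = (if v = 0 then 2 * j else if v = 1 then 2 * j + 1
     else if v = 2 * j then 0 else if v = 2 * j + 1 then 1 else pair_match v)"

lemma perfect_matching_pair_match: "even n \<Longrightarrow> perfect_matching n pair_match"
  unfolding perfect_matching_def pair_match_def by presburger

lemma pair_match_pair_match [simp]: "pair_match (pair_match v) = v"
  by (auto simp: pair_match_def)

lemma pair_match_simps [simp]:
  "pair_match 0 = 1" "pair_match (Suc 0) = 0"
  "pair_match (2 * j) = Suc (2 * j)" "pair_match (Suc (2 * j)) = 2 * j"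
  unfolding pair_match_def by simp_all

lemma perfect_matching_rematch:
  assumes n: "even n" and j: "1 \<le> j" "2 * j + 1 < n"
  shows "perfect_matching n (rematch j)"
  unfolding perfect_matching_def
proof (intro allI impI)
  fix v assume "v < n"
  then have pm: "pair_match v < n" "pair_match v \<noteq> v"
    using perfect_matching_pair_match[OF n] unfolding perfect_matching_def by auto
  show "rematch j v < n \<and> rematch j v \<noteq> v \<and> rematch j (rematch j v) = v"
  proof (cases "v \<in> {0, 1, 2 * j, 2 * j + 1}")
    case True
    then show ?thesis
      using j by (auto simp: rematch_def)
  next
    case False
    have "pair_match ` {0, 1, 2 * j, 2 * j + 1} = {0, 1, 2 * j, 2 * j + 1}"
      by auto
    then have "pair_match v \<notin> {0, 1, 2 * j, 2 * j + 1}"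
      using False by (metis imageI pair_match_pair_match)
    then show ?thesis
      using False pm by (simp add: rematch_def)
  qed
qed

lemma rematch_moves: "1 \<le> j \<Longrightarrow> rematch j v \<noteq> pair_match v \<Longrightarrow> v \<in> {0, 1, 2 * j, 2 * j + 1}"
  unfolding rematch_def by (simp split: if_splits)

lemma rematch_inj:
  assumes j: "1 \<le> j" "1 \<le> j'" and eq: "rematch j v = rematch j' v"
    and moved: "rematch j v \<noteq> pair_match v"
  shows "j = j'"
proof -
  consider "v = 0" | "v = 1" | "2 \<le> v"
    by linarith
  then show ?thesis
  proof cases
    case 3
    have "rematch j' v \<noteq> pair_match v"
      using eq moved by simp
    from rematch_moves[OF j(2) this] have "v = 2 * j' \<or> v = 2 * j' + 1"
      using 3 by auto
    moreover from rematch_moves[OF j(1) moved] have "v = 2 * j \<or> v = 2 * j + 1"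
      using 3 by auto
    ultimately have "v div 2 = j" "v div 2 = j'"
      by auto
    then show ?thesis
      by simp
  qed (use eq in \<open>simp_all add: rematch_def\<close>)
qed

lemma perfect_matching_eq_iff:
  "perfect_matching n p \<Longrightarrow> u < n \<Longrightarrow> v < n \<Longrightarrow> u = p v \<longleftrightarrow> v = p u"
  unfolding perfect_matching_def by metis

definition cocktail_nbrs :: "nat \<Rightarrow> nat \<Rightarrow> nat list" where
  "cocktail_nbrs n v = filter (\<lambda>u. u \<noteq> v \<and> u \<noteq> pair_match v) [0..<n]"

text \<open>The complete graph on n vertices minus the perfect matching p. The neighbour list of v is
  the one for pair_match with p v replaced by pair_match v, so graphs for different matchings answer
  a neighbour query (v, i) differently only if they match v differently, and then only at the
  position of p v.\<close>
definition cocktail :: "nat \<Rightarrow> (nat \<Rightarrow> nat) \<Rightarrow> graph" where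
  "cocktail n p = \<lparr>nv = n,
     adj = (\<lambda>v. map (\<lambda>u. if u = p v then pair_match v else u) (cocktail_nbrs n v))\<rparr>"

lemma nv_cocktail [simp]: "nv (cocktail n p) = n"
  by (simp add: cocktail_def)

lemma adj_cocktail:
  "adj (cocktail n p) v = map (\<lambda>u. if u = p v then pair_match v else u) (cocktail_nbrs n v)"
  by (simp add: cocktail_def)

lemma set_cocktail_nbrs: "set (cocktail_nbrs n v) = {u. u < n \<and> u \<noteq> v \<and> u \<noteq> pair_match v}"
  by (auto simp: cocktail_nbrs_def)

lemma deg_cocktail_eq_length: "deg (cocktail n p) v = (if v < n then length (cocktail_nbrs n v) else 0)"
  by (simp add: deg_def adj_cocktail)

lemma set_adj_cocktail:
  assumes p: "perfect_matching n p" and n: "even n" and v: "v < n"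
  shows "set (adj (cocktail n p) v) = {..<n} - {v, p v}"
proof -
  have "p v < n" "p v \<noteq> v" "pair_match v < n" "pair_match v \<noteq> v"
    using p perfect_matching_pair_match[OF n] v by (auto simp: perfect_matching_def)
  then show ?thesis
    unfolding adj_cocktail set_map set_cocktail_nbrs by (auto simp: image_iff)
qed

lemma distinct_adj_cocktail: "distinct (adj (cocktail n p) v)"
proof -
  have "inj_on (\<lambda>u. if u = p v then pair_match v else u) (set (cocktail_nbrs n v))"
    unfolding inj_on_def set_cocktail_nbrs by auto
  then show ?thesis
    unfolding adj_cocktail by (simp add: distinct_map cocktail_nbrs_def)
qed

lemma deg_cocktail:
  assumes p: "perfect_matching n p" and n: "even n" and v: "v < n"
  shows "deg (cocktail n p) v = n - 2"
proof -
  have "p v < n" "p v \<noteq> v"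
    using p v by (auto simp: perfect_matching_def)
  then have "card ({..<n} - {v, p v}) = n - 2"
    using v by (subst card_Diff_subset) auto
  then show ?thesis
    using set_adj_cocktail[OF assms] distinct_card[OF distinct_adj_cocktail[of n p v]] v
    by (simp add: deg_def)
qed

lemma valid_graph_cocktail:
  assumes p: "perfect_matching n p" and n: "even n"
  shows "valid_graph (cocktail n p)"
  unfolding valid_graph_def nv_cocktail
  using set_adj_cocktail[OF p n] distinct_adj_cocktail perfect_matching_eq_iff[OF p] by auto

lemma nbr_cocktail:
  "nbr (cocktail n p) v i = map_option (\<lambda>u. if u = p v then pair_match v else u)
     (nbr (cocktail n pair_match) v i)"
  by (simp add: nbr_def deg_cocktail_eq_length adj_cocktail)

lemma nbr_cocktail_pair_match_ne: "nbr (cocktail n pair_match) v i \<noteq> Some (pair_match v)"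
proof
  assume "nbr (cocktail n pair_match) v i = Some (pair_match v)"
  then have "pair_match v \<in> set (cocktail_nbrs n v)"
    by (auto simp: nbr_def deg_cocktail_eq_length adj_cocktail split: if_splits) (metis nth_mem)
  then show False
    by (simp add: set_cocktail_nbrs)
qed

lemma laplacian_cocktail:
  assumes p: "perfect_matching n p" and n: "even n"
  shows "laplacian (cocktail n p) =
    mat n n (\<lambda>(i, j). (real n - 1) * (if i = j then 1 else 0) - 1 + (if j = p i then 1 else 0))"
    (is "_ = mat n n ?L")
proof (rule eq_matI)
  fix i j assume "i < dim_row (mat n n ?L)" "j < dim_col (mat n n ?L)"
  then have i: "i < n" and j: "j < n"
    by auto
  have "p i \<noteq> i" "2 \<le> n"
    using p i n by (auto simp: perfect_matching_def elim: oddE)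
  then have "real (deg (cocktail n p) i) = real n - 2"
    using deg_cocktail[OF p n i] by simp
  then show "laplacian (cocktail n p) $$ (i, j) = mat n n ?L $$ (i, j)"
    using i j \<open>p i \<noteq> i\<close> set_adj_cocktail[OF p n i] by (cases "i = j") (simp_all add: laplacian_def)
qed (simp_all add: laplacian_def)

text \<open>On the orthogonal complement of the all-ones vector, the Laplacian acts as (n - 1) I + P,
  where P is the permutation matrix of p. Since P * P = I, the inverse there is
  ((n - 1) I - P) / (n (n - 2)); the constant term makes the columns sum to zero.\<close>
definition cocktail_pinv :: "nat \<Rightarrow> (nat \<Rightarrow> nat) \<Rightarrow> nat \<times> nat \<Rightarrow> real" where
  "cocktail_pinv n p = (\<lambda>(i, j).
     ((real n - 1) * (if i = j then 1 else 0) - (if j = p i then 1 else 0)) / (real n * (real n - 2))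
     - 1 / (real n)\<^sup>2)"

lemma cocktail_pinv_col_sum:
  assumes p: "perfect_matching n p" and n: "4 \<le> n" and j: "j < n"
  shows "(\<Sum>k<n. cocktail_pinv n p (k, j)) = 0"
proof -
  have "(\<Sum>k<n. (if j = p k then 1 else 0) :: real) = (\<Sum>k<n. if k = p j then 1 else 0)"
    using perfect_matching_eq_iff[OF p _ j] by (intro sum.cong) auto
  also have "\<dots> = 1"
    using p j by (simp add: perfect_matching_def)
  finally have "(\<Sum>k<n. (real n - 1) * (if k = j then 1 else 0) - (if j = p k then 1 else 0)) = real n - 2"
    using j by (simp add: sum_subtractf flip: sum_distrib_left)
  then have "(\<Sum>k<n. cocktail_pinv n p (k, j)) = (real n - 2) / (real n * (real n - 2)) - real n / (real n)\<^sup>2"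
    by (simp add: cocktail_pinv_def sum_subtractf flip: sum_divide_distrib)
  also have "\<dots> = 0"
    using n by (simp add: power2_eq_square)
  finally show ?thesis .
qed

lemma cocktail_pinv_partner_sum:
  assumes p: "perfect_matching n p" and n: "4 \<le> n" and i: "i < n"
  shows "(real n - 1) * cocktail_pinv n p (i, j) + cocktail_pinv n p (p i, j)
    = (if i = j then 1 else 0) - 1 / real n"
proof -
  define u w where "u = 1 / (real n * (real n - 2))" and "w = 1 / real n"
  have u: "real n * (real n - 2) * u = 1" and w: "real n * w = 1"
    using n by (simp_all add: u_def w_def)
  have entry: "cocktail_pinv n p (k, j)
      = ((real n - 1) * (if k = j then 1 else 0) - (if j = p k then 1 else 0)) * u - w\<^sup>2" for k
    by (simp add: cocktail_pinv_def u_def w_def divide_inverse power_inverse)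
  have "p (p i) = i"
    using p i by (simp add: perfect_matching_def)
  then have "(real n - 1) * cocktail_pinv n p (i, j) + cocktail_pinv n p (p i, j)
      = (real n * (real n - 2) * u) * (if i = j then 1 else 0) - (real n * w) * w"
    by (simp add: entry algebra_simps power2_eq_square eq_commute[of j])
  then show ?thesis
    using u w by (simp add: w_def)
qed

lemma laplacian_cocktail_mult_pinv:
  assumes p: "perfect_matching n p" and n: "even n" "4 \<le> n"
  shows "laplacian (cocktail n p) * mat n n (cocktail_pinv n p) = centering_mat n"
proof (rule eq_matI)
  fix i j assume "i < dim_row (centering_mat n)" "j < dim_col (centering_mat n)"
  then have i: "i < n" and j: "j < n"
    by (simp_all add: centering_mat_def)
  have pi: "p i < n"
    using p i by (simp add: perfect_matching_def)
  have "(\<Sum>k<n. ((real n - 1) * (if i = k then 1 else 0) - 1 + (if k = p i then 1 else 0))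
           * cocktail_pinv n p (k, j))
      = (\<Sum>k<n. (if k = i then (real n - 1) * cocktail_pinv n p (k, j) else 0)
                + (if k = p i then cocktail_pinv n p (k, j) else 0) - cocktail_pinv n p (k, j))"
    by (intro sum.cong) (auto simp: algebra_simps)
  also have "\<dots> = (real n - 1) * cocktail_pinv n p (i, j) + cocktail_pinv n p (p i, j)"
    using i pi cocktail_pinv_col_sum[OF p n(2) j] by (simp add: sum.distrib sum_subtractf)
  finally show "(laplacian (cocktail n p) * mat n n (cocktail_pinv n p)) $$ (i, j) = centering_mat n $$ (i, j)"
    unfolding laplacian_cocktail[OF p n(1)] mat_mult_mat centering_mat_def
    using i j cocktail_pinv_partner_sum[OF p n(2) i] by simp
qed (simp_all add: centering_mat_def laplacian_def)

lemma pinv_laplacian_cocktail: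
  assumes p: "perfect_matching n p" and n: "even n" "4 \<le> n"
  shows "pinv (laplacian (cocktail n p)) = mat n n (cocktail_pinv n p)"
proof (rule pinv_laplacian_eq[OF valid_graph_cocktail[OF p n(1)] nv_cocktail])
  fix i j assume "i < n" "j < n"
  then show "cocktail_pinv n p (j, i) = cocktail_pinv n p (i, j)"
    using perfect_matching_eq_iff[OF p] by (auto simp: cocktail_pinv_def)
next
  fix j assume "j < n"
  then show "(\<Sum>k<n. cocktail_pinv n p (k, j)) = 0"
    by (rule cocktail_pinv_col_sum[OF p n(2)])
next
  show "laplacian (cocktail n p) * mat n n (cocktail_pinv n p) = centering_mat n"
    by (rule laplacian_cocktail_mult_pinv[OF p n])
qed

lemma eff_res_cocktail:
  assumes p: "perfect_matching n p" and n: "even n" "4 \<le> n"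
  shows "eff_res (cocktail n p) 0 1
    = 2 * (real n - 1 + (if p 0 = 1 then 1 else 0)) / (real n * (real n - 2))"
proof -
  have "p 0 \<noteq> 0" "p 1 \<noteq> 1" "p 1 = 0 \<longleftrightarrow> p 0 = 1"
    using p n perfect_matching_eq_iff[OF p, of 0 1] by (auto simp: perfect_matching_def)
  moreover have "eff_res (cocktail n p) 0 1 = cocktail_pinv n p (0, 0) - cocktail_pinv n p (0, 1)
      - cocktail_pinv n p (1, 0) + cocktail_pinv n p (1, 1)"
    using n by (intro eff_res_eq_pinv_entries) (simp_all add: pinv_laplacian_cocktail[OF p n])
  ultimately show ?thesis
    by (simp add: cocktail_pinv_def diff_divide_distrib add_divide_distrib)
qed

lemma eff_res_cocktail_pair_match:
  assumes "even n" "4 \<le> n"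
  shows "eff_res (cocktail n pair_match) 0 1 = 2 / (real n - 2)"
  using eff_res_cocktail[OF perfect_matching_pair_match[OF assms(1)] assms] assms(2) by simp

lemma eff_res_cocktail_rematch:
  assumes "even n" "1 \<le> j" "2 * j + 1 < n"
  shows "eff_res (cocktail n (rematch j)) 0 1 = (1 - 1 / real n) * (2 / (real n - 2))"
proof -
  have "4 \<le> n" "rematch j 0 \<noteq> 1"
    using assms by (auto simp: rematch_def)
  then show ?thesis
    using eff_res_cocktail[OF perfect_matching_rematch[OF assms] assms(1)] by (simp add: field_simps)
qed

definition rematch_queries :: "nat \<Rightarrow> nat \<Rightarrow> (nat \<times> nat) set" where
  "rematch_queries n j = {(v, i). nbr (cocktail n pair_match) v i = Some (rematch j v)}"

lemma nbr_cocktail_rematch: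
  "(v, i) \<notin> rematch_queries n j \<Longrightarrow> nbr (cocktail n (rematch j)) v i = nbr (cocktail n pair_match) v i"
  unfolding rematch_queries_def nbr_cocktail[of n "rematch j"]
  by (cases "nbr (cocktail n pair_match) v i") auto

lemma rematch_queries_disjoint:
  assumes "1 \<le> j" "1 \<le> j'" "x \<in> rematch_queries n j" "x \<in> rematch_queries n j'"
  shows "j = j'"
proof -
  obtain v i where "nbr (cocktail n pair_match) v i = Some (rematch j v)"
    "nbr (cocktail n pair_match) v i = Some (rematch j' v)"
    using assms(3,4) unfolding rematch_queries_def by blast
  then have "rematch j v = rematch j' v" "rematch j v \<noteq> pair_match v"
    using nbr_cocktail_pair_match_ne[of n v i] by auto
  then show ?thesis
    using rematch_inj assms(1,2) by blast
qed

lemma ex_rematch_hit_prob_le: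
  assumes "2 \<le> K"
  shows "\<exists>j\<in>{1..<K}. hit_prob (cocktail n pair_match) (rematch_queries n j) A q \<le> real q / real (K - 1)"
proof -
  let ?h = "\<lambda>j. hit_prob (cocktail n pair_match) (rematch_queries n j) A q"
  have "(\<Sum>j\<in>{1..<K}. ?h j) \<le> real q"
    by (rule sum_hit_prob_le_budget) (auto intro: rematch_queries_disjoint)
  moreover obtain j where "j \<in> {1..<K}" "?h j \<le> (\<Sum>j\<in>{1..<K}. ?h j) / card {1..<K}"
    using ex_le_average[of "{1..<K}" ?h] assms by auto
  ultimately show ?thesis
    using divide_right_mono[of "\<Sum>j\<in>{1..<K}. ?h j" "real q" "real (K - 1)"] by force
qed

lemma cut_size_cocktail:
  assumes p: "perfect_matching n p" and n: "even n" and S: "S \<subseteq> {..<n}"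
  shows "real (cut_size (cocktail n p) S)
    = real (card S) * real (n - card S) - real (card {u\<in>S. p u \<notin> S})"
proof -
  have finS: "finite S"
    using S finite_subset by blast
  have "{(u, v). u \<in> S \<and> v \<in> {..<nv (cocktail n p)} - S \<and> v \<in> set (adj (cocktail n p) u)}
      = Sigma S (\<lambda>u. ({..<n} - S) - {p u})"
    using set_adj_cocktail[OF p n] S by auto
  then have "real (cut_size (cocktail n p) S) = (\<Sum>u\<in>S. real (card (({..<n} - S) - {p u})))"
    unfolding cut_size_def using finS by (simp add: card_SigmaI)
  also have "\<dots> = (\<Sum>u\<in>S. real (n - card S) - (if p u \<notin> S then 1 else 0))"
  proof (rule sum.cong)
    fix u assume "u \<in> S"
    then have "p u < n"
      using p S by (auto simp: perfect_matching_def)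
    moreover have card: "card ({..<n} - S) = n - card S"
      using S finS by (simp add: card_Diff_subset)
    moreover have "0 < n - card S" if "p u \<notin> S" "p u < n"
      using that card card_gt_0_iff[of "{..<n} - S"] by auto
    ultimately show "real (card (({..<n} - S) - {p u})) = real (n - card S) - (if p u \<notin> S then 1 else 0)"
      by (auto simp: card_Diff_singleton_if of_nat_diff)
  qed simp
  also have "\<dots> = real (card S) * real (n - card S) - real (card {u\<in>S. p u \<notin> S})"
    using finS by (simp add: sum_subtractf sum.If_cases Int_def conj_commute)
  finally show ?thesis .
qed

lemma card_matched_out_le:
  assumes p: "perfect_matching n p" and S: "S \<subseteq> {..<n}"
  shows "card {u\<in>S. p u \<notin> S} \<le> n - card S"
proof -
  have "inj_on p {..<n}"
    using p unfolding perfect_matching_def inj_on_def by (metis lessThan_iff)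
  then have "inj_on p {u\<in>S. p u \<notin> S}"
    by (rule inj_on_subset) (use S in blast)
  moreover have "p ` {u\<in>S. p u \<notin> S} \<subseteq> {..<n} - S"
    using p S by (auto simp: perfect_matching_def)
  ultimately have "card {u\<in>S. p u \<notin> S} \<le> card ({..<n} - S)"
    by (intro card_inj_on_le) auto
  then show ?thesis
    using S finite_subset[OF S finite_lessThan] by (simp add: card_Diff_subset)
qed

lemma cut_size_cocktail_ge:
  assumes p: "perfect_matching n p" and n: "even n" and S: "S \<subseteq> {..<n}"
  shows "real (card S) * (real n - real (card S)) - min (real (card S)) (real n - real (card S))
    \<le> cut_size (cocktail n p) S"
proof -
  have "finite S"
    using S finite_subset by blast
  then have "card {u\<in>S. p u \<notin> S} \<le> card S" "card S \<le> n"
    using S card_mono[of "{..<n}" S] by (auto intro: card_mono)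
  moreover have "card {u\<in>S. p u \<notin> S} \<le> n - card S"
    by (rule card_matched_out_le[OF p S])
  ultimately have "real (card {u\<in>S. p u \<notin> S}) \<le> min (real (card S)) (real n - real (card S))"
    by (simp add: of_nat_diff)
  then show ?thesis
    using cut_size_cocktail[OF p n S] \<open>card S \<le> n\<close> by (simp add: of_nat_diff)
qed

lemma vol_cocktail:
  assumes p: "perfect_matching n p" and n: "even n" "2 \<le> n" and S: "S \<subseteq> {..<n}"
  shows "vol (cocktail n p) S = real (card S) * (real n - 2)"
proof -
  have "vol (cocktail n p) S = (\<Sum>u\<in>S. real n - 2)"
    unfolding vol_def using S deg_cocktail[OF p n(1)] n(2) by (intro sum.cong) auto
  then show ?thesis
    by simp
qed

lemma expander_cocktail:
  assumes p: "perfect_matching n p" and n: "even n" "4 \<le> n"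
  shows "expander (1/4) (cocktail n p)"
  unfolding expander_def
proof
  show "2 \<le> nv (cocktail n p)"
    using n by simp
  show "1/4 \<le> conductance (cocktail n p)"
  proof (rule conductance_ge)
    fix S assume S: "S \<subseteq> {..<nv (cocktail n p)}" "S \<noteq> {}" "S \<noteq> {..<nv (cocktail n p)}"
    define k where "k = card S"
    have "finite S"
      using S(1) finite_subset by auto
    then have "k \<noteq> 0" "k \<noteq> n" "k \<le> n"
      using S card_subset_eq[OF finite_lessThan, of S n] card_mono[of "{..<n}" S]
      unfolding k_def by auto
    then have k: "1 \<le> real k" "real k < real n"
      by auto
    have cut: "real k * (real n - real k) - min (real k) (real n - real k) \<le> cut_size (cocktail n p) S"
      using cut_size_cocktail_ge[OF p n(1)] S(1) unfolding k_def by simp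
    have vol: "vol (cocktail n p) S = real k * (real n - 2)"
      "vol (cocktail n p) ({..<n} - S) = (real n - real k) * (real n - 2)"
      using vol_cocktail[OF p n(1)] n(2) S(1) \<open>finite S\<close> \<open>k \<le> n\<close> unfolding k_def
      by (simp_all add: card_Diff_subset of_nat_diff)
    show "1/4 * vol (cocktail n p) S \<le> cut_size (cocktail n p) S
        \<or> 1/4 * vol (cocktail n p) ({..<nv (cocktail n p)} - S) \<le> cut_size (cocktail n p) S"
    proof (cases "2 * real k \<le> real n")
      case True
      then have "real k * (real n - 2) \<le> real k * (4 * (real n - real k - 1))"
        using n(2) k by (intro mult_left_mono) auto
      then have "1/4 * vol (cocktail n p) S \<le> cut_size (cocktail n p) S"
        using cut vol min.cobounded1[of "real k" "real n - real k"] by (simp add: algebra_simps)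
      then show ?thesis ..
    next
      case False
      then have "(real n - real k) * (real n - 2) \<le> (real n - real k) * (4 * (real k - 1))"
        using k by (intro mult_left_mono) auto
      then have "1/4 * vol (cocktail n p) ({..<n} - S) \<le> cut_size (cocktail n p) S"
        using cut vol min.cobounded2[of "real k" "real n - real k"] by (simp add: algebra_simps)
      then show ?thesis
        by simp
    qed
  qed (use n deg_cocktail[OF p n(1)] in auto)
qed

section \<open>Stars\<close>

definition star :: "nat \<Rightarrow> graph" where
  "star m = \<lparr>nv = Suc m, adj = (\<lambda>v. if v = m then [0..<m] else [m])\<rparr>"

lemma nv_star [simp]: "nv (star m) = Suc m"
  by (simp add: star_def)

lemma adj_star: "adj (star m) v = (if v = m then [0..<m] else [m])"
  by (simp add: star_def)

lemma set_adj_star: "set (adj (star m) v) = (if v = m then {..<m} else {m})"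
  by (auto simp: adj_star)

lemma deg_star: "v < Suc m \<Longrightarrow> deg (star m) v = (if v = m then m else 1)"
  by (simp add: deg_def adj_star)

lemma valid_graph_star: "valid_graph (star m)"
  unfolding valid_graph_def by (auto simp: adj_star)

lemma laplacian_star:
  "laplacian (star m) = mat (Suc m) (Suc m) (\<lambda>(i, k).
     if i = m then real (Suc m) * (if k = m then 1 else 0) - 1
     else (if k = i then 1 else 0) - (if k = m then 1 else 0))"
  by (rule eq_matI) (auto simp: laplacian_def deg_star set_adj_star)

text \<open>With \<Pi> the centering matrix and K the indicator of the leaves, this is \<Pi> K \<Pi>: a centred
  vector x is sent to the centred potential y with y i - y m = x i at every leaf i.\<close>
definition star_pinv :: "nat \<Rightarrow> nat \<times> nat \<Rightarrow> real" where
  "star_pinv m = (\<lambda>(i, j). (if i = j then 1 else 0) - 1 / real (Suc m)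
     - ((if i = m then 1 else 0) - 1 / real (Suc m)) * ((if j = m then 1 else 0) - 1 / real (Suc m)))"

lemma star_pinv_col_sum:
  assumes "j < Suc m"
  shows "(\<Sum>k<Suc m. star_pinv m (k, j)) = 0"
proof -
  have "(\<Sum>k<Suc m. (if k = c then 1 else 0) - 1 / real (Suc m)) = 0" if "c < Suc m" for c
    using that by (simp add: sum_subtractf)
  from this[of j] this[of m] show ?thesis
    using assms by (simp add: star_pinv_def sum_subtractf eq_commute[of _ j] flip: sum_distrib_right)
qed

lemma star_pinv_centre: "real (Suc m) * star_pinv m (m, j) = (if m = j then 1 else 0) - 1 / real (Suc m)"
proof -
  define a where "a = 1 / real (Suc m)"
  have entry: "star_pinv m (k, l)
      = (if k = l then 1 else 0) - a - ((if k = m then 1 else 0) - a) * ((if l = m then 1 else 0) - a)" for k l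
    by (simp add: star_pinv_def a_def)
  have "star_pinv m (m, j) = a * ((if m = j then 1 else 0) - a)"
    by (cases "j = m") (simp_all add: entry algebra_simps)
  then show ?thesis
    by (simp add: a_def)
qed

lemma star_pinv_leaf:
  "i \<noteq> m \<Longrightarrow> star_pinv m (i, j) - star_pinv m (m, j) = (if i = j then 1 else 0) - 1 / real (Suc m)"
  by (cases "j = m") (simp_all add: star_pinv_def algebra_simps)

lemma laplacian_star_mult_pinv:
  "laplacian (star m) * mat (Suc m) (Suc m) (star_pinv m) = centering_mat (Suc m)"
proof (rule eq_matI)
  fix i j assume "i < dim_row (centering_mat (Suc m))" "j < dim_col (centering_mat (Suc m))"
  then have i: "i < Suc m" and j: "j < Suc m"
    by (simp_all add: centering_mat_def)
  have "(\<Sum>k<Suc m. (if i = m then real (Suc m) * (if k = m then 1 else 0) - 1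
          else (if k = i then 1 else 0) - (if k = m then 1 else 0)) * star_pinv m (k, j))
      = (if i = m then real (Suc m) * star_pinv m (m, j) else star_pinv m (i, j) - star_pinv m (m, j))"
  proof (cases "i = m")
    case True
    have "(\<Sum>k<Suc m. (real (Suc m) * (if k = m then 1 else 0) - 1) * star_pinv m (k, j))
        = (\<Sum>k<Suc m. (if k = m then real (Suc m) * star_pinv m (k, j) else 0) - star_pinv m (k, j))"
      by (intro sum.cong) (auto simp: algebra_simps)
    then show ?thesis
      using True star_pinv_col_sum[OF j] by (simp add: sum_subtractf)
  next
    case False
    have "(\<Sum>k<Suc m. ((if k = i then 1 else 0) - (if k = m then 1 else 0)) * star_pinv m (k, j))
        = (\<Sum>k<Suc m. (if k = i then star_pinv m (k, j) else 0) - (if k = m then star_pinv m (k, j) else 0))"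
      by (intro sum.cong) auto
    then show ?thesis
      using False i by (simp add: sum_subtractf)
  qed
  also have "\<dots> = (if i = j then 1 else 0) - 1 / real (Suc m)"
    using star_pinv_centre star_pinv_leaf by auto
  finally show "(laplacian (star m) * mat (Suc m) (Suc m) (star_pinv m)) $$ (i, j)
      = centering_mat (Suc m) $$ (i, j)"
    unfolding laplacian_star mat_mult_mat centering_mat_def using i j by simp
qed (simp_all add: centering_mat_def laplacian_def)

lemma eff_res_star:
  assumes "2 \<le> m"
  shows "eff_res (star m) 0 1 = 2"
proof -
  have "pinv (laplacian (star m)) = mat (Suc m) (Suc m) (star_pinv m)"
  proof (rule pinv_laplacian_eq[OF valid_graph_star nv_star])
    show "star_pinv m (j, i) = star_pinv m (i, j)" for i j
      by (simp add: star_pinv_def)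
  qed (fact star_pinv_col_sum, fact laplacian_star_mult_pinv)
  then have "eff_res (star m) 0 1 = star_pinv m (0, 0) - star_pinv m (0, 1) - star_pinv m (1, 0) + star_pinv m (1, 1)"
    using assms by (intro eff_res_eq_pinv_entries) auto
  then show ?thesis
    using assms by (simp add: star_pinv_def)
qed

lemma vol_star_leaves: "A \<subseteq> {..<m} \<Longrightarrow> vol (star m) A = real (card A)"
  unfolding vol_def by (subst sum.cong[of A A _ "\<lambda>_. 1"]) (auto simp: deg_star)

lemma expander_star:
  assumes "2 \<le> m"
  shows "expander (1/4) (star m)"
  unfolding expander_def
proof
  show "2 \<le> nv (star m)"
    using assms by simp
  show "1/4 \<le> conductance (star m)"
  proof (rule conductance_ge)
    fix S assume S: "S \<subseteq> {..<nv (star m)}" "S \<noteq> {}" "S \<noteq> {..<nv (star m)}"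
    show "1/4 * vol (star m) S \<le> cut_size (star m) S
        \<or> 1/4 * vol (star m) ({..<nv (star m)} - S) \<le> cut_size (star m) S"
    proof (cases "m \<in> S")
      case True
      then have "card {m} * card ({..<Suc m} - S) \<le> cut_size (star m) S"
        using S(1) by (intro card_le_cut_size) (auto simp: set_adj_star elim: less_SucE)
      moreover have "vol (star m) ({..<Suc m} - S) = real (card ({..<Suc m} - S))"
        using True by (intro vol_star_leaves) (auto elim: less_SucE)
      ultimately show ?thesis
        by simp
    next
      case False
      then have "card S * card {m} \<le> cut_size (star m) S"
        using S(1) by (intro card_le_cut_size) (auto simp: set_adj_star)
      moreover have "vol (star m) S = real (card S)"
        using False S(1) by (intro vol_star_leaves) (auto simp: less_Suc_eq)
      ultimately show ?thesis
        by simp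
    qed
  qed (use assms in \<open>auto simp: deg_star\<close>)
qed

section \<open>The lower bound\<close>

definition approx_set :: "real \<Rightarrow> real \<Rightarrow> real option set" where
  "approx_set \<epsilon> R = {Some r | r. approx_eq \<epsilon> r R}"

lemma approx_sets_disjoint:
  "(1 + \<epsilon>) * R' < (1 - \<epsilon>) * R \<Longrightarrow> approx_set \<epsilon> R \<inter> approx_set \<epsilon> R' = {}"
  unfolding approx_set_def approx_eq_def by force

lemma prob_diff_ge_if_disjoint:
  assumes "X \<inter> Y = {}" "2/3 \<le> measure_pmf.prob p X" "2/3 \<le> measure_pmf.prob q Y"
  shows "1/3 \<le> measure_pmf.prob p X - measure_pmf.prob q X"
proof -
  have "measure_pmf.prob q X + measure_pmf.prob q Y = measure_pmf.prob q (X \<union> Y)"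
    using assms(1) by (simp add: measure_pmf.finite_measure_Union)
  also have "\<dots> \<le> 1"
    by (rule measure_pmf.prob_le_1)
  finally show ?thesis
    using assms(2,3) by linarith
qed

definition estimates_eff_res :: "real \<Rightarrow> (nat \<Rightarrow> qalg) \<Rightarrow> nat \<Rightarrow> bool" where
  "estimates_eff_res \<epsilon> B q \<longleftrightarrow> (\<forall>G. valid_graph G \<and> expander (1/4) G \<and> 2 \<le> nv G \<longrightarrow>
     2/3 \<le> measure_pmf.prob (run G (B (nv G)) q) (approx_set \<epsilon> (eff_res G 0 1)))"

lemma estimates_eff_resD:
  "estimates_eff_res \<epsilon> B q \<Longrightarrow> valid_graph G \<Longrightarrow> expander (1/4) G \<Longrightarrow> 2 \<le> nv G \<Longrightarrow>
    2/3 \<le> measure_pmf.prob (run G (B (nv G)) q) (approx_set \<epsilon> (eff_res G 0 1))"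
  unfolding estimates_eff_res_def by blast

lemma estimates_eff_res_separates:
  assumes B: "estimates_eff_res \<epsilon> B q"
    and G: "valid_graph G" "expander (1/4) G" and H: "valid_graph H" "expander (1/4) H"
    and n: "nv G = n" "nv H = n" "2 \<le> n"
    and gap: "(1 + \<epsilon>) * eff_res H 0 1 < (1 - \<epsilon>) * eff_res G 0 1"
  shows "1/3 \<le> measure_pmf.prob (run G (B n) q) (approx_set \<epsilon> (eff_res G 0 1))
    - measure_pmf.prob (run H (B n) q) (approx_set \<epsilon> (eff_res G 0 1))"
  using prob_diff_ge_if_disjoint[OF approx_sets_disjoint[OF gap]]
    estimates_eff_resD[OF B G] estimates_eff_resD[OF B H] n
  by simp

lemma estimates_eff_res_queries_pos:
  assumes "\<epsilon> < 1" and B: "estimates_eff_res \<epsilon> B q"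
  shows "q \<noteq> 0"
proof
  assume "q = 0"
  obtain N :: nat where N: "(1 + \<epsilon>) / (1 - \<epsilon>) < real N"
    using reals_Archimedean2 by blast
  define m where "m = 2 * N + 3"
  have m: "2 \<le> m" and n: "even (Suc m)" "4 \<le> Suc m"
    unfolding m_def by auto
  have "1 + \<epsilon> < (1 - \<epsilon>) * (real (Suc m) - 2)"
    using N \<open>\<epsilon> < 1\<close> unfolding m_def by (simp add: divide_less_eq algebra_simps)
  then have gap: "(1 + \<epsilon>) * eff_res (cocktail (Suc m) pair_match) 0 1 < (1 - \<epsilon>) * eff_res (star m) 0 1"
    unfolding eff_res_cocktail_pair_match[OF n] eff_res_star[OF m] using n by (simp add: field_simps)
  have "1/3 \<le> measure_pmf.prob (run (star m) (B (Suc m)) q) (approx_set \<epsilon> (eff_res (star m) 0 1))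
      - measure_pmf.prob (run (cocktail (Suc m) pair_match) (B (Suc m)) q) (approx_set \<epsilon> (eff_res (star m) 0 1))"
    by (rule estimates_eff_res_separates[OF B _ _ _ _ _ _ _ gap])
      (use m n in \<open>simp_all add: valid_graph_star expander_star valid_graph_cocktail expander_cocktail
        perfect_matching_pair_match\<close>)
  moreover have "run (star m) (B (Suc m)) 0 = run (cocktail (Suc m) pair_match) (B (Suc m)) 0"
    by (rule run_0_cong) simp
  ultimately show False
    using \<open>q = 0\<close> by simp
qed

lemma estimates_eff_res_queries_ge:
  assumes "0 < \<epsilon>" "q \<noteq> 0" and B: "estimates_eff_res \<epsilon> B q"
  shows "1 \<le> 40 * real q * \<epsilon>"
proof (rule ccontr)
  assume small: "\<not> 1 \<le> 40 * real q * \<epsilon>"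
  define n where "n = 6 * q + 4"
  have n: "even n" "4 \<le> n"
    unfolding n_def by auto
  let ?G = "cocktail n pair_match" and ?D = "rematch_queries n"
  obtain j where "j \<in> {1..<3 * q + 2}" and hit: "hit_prob ?G (?D j) (B n) q \<le> real q / real (3 * q + 1)"
    using ex_rematch_hit_prob_le[of "3 * q + 2" n "B n" q] by auto
  then have j: "1 \<le> j" "2 * j + 1 < n"
    unfolding n_def by auto
  have "\<epsilon> \<le> real q * \<epsilon>"
    using \<open>q \<noteq> 0\<close> \<open>0 < \<epsilon>\<close> by simp
  then have "(1 + \<epsilon>) * (1 - 1 / real n) < 1 - \<epsilon>"
    using small n by (simp add: n_def field_simps)
  moreover have "0 < 2 / (real n - 2)"
    using n by simp
  ultimately have "(1 + \<epsilon>) * (1 - 1 / real n) * (2 / (real n - 2)) < (1 - \<epsilon>) * (2 / (real n - 2))"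
    by (rule mult_strict_right_mono)
  then have "(1 + \<epsilon>) * eff_res (cocktail n (rematch j)) 0 1 < (1 - \<epsilon>) * eff_res ?G 0 1"
    unfolding eff_res_cocktail_pair_match[OF n] eff_res_cocktail_rematch[OF n(1) j]
    by (simp only: mult.assoc)
  then have "1/3 \<le> measure_pmf.prob (run ?G (B n) q) (approx_set \<epsilon> (eff_res ?G 0 1))
      - measure_pmf.prob (run (cocktail n (rematch j)) (B n) q) (approx_set \<epsilon> (eff_res ?G 0 1))"
    using n perfect_matching_rematch[OF n(1) j]
    by (intro estimates_eff_res_separates[OF B]) (simp_all add: valid_graph_cocktail expander_cocktail
        perfect_matching_pair_match)
  also have "\<dots> \<le> hit_prob ?G (?D j) (B n) q"
    using n by (intro abs_le_D1[OF prob_run_diff_le_hit_prob])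
      (simp_all add: deg_cocktail_eq_length nbr_cocktail_rematch)
  also have "\<dots> < 1/3"
  proof -
    have "real q / real (3 * q + 1) < 1/3"
      by (simp add: divide_less_eq)
    with hit show ?thesis
      by linarith
  qed
  finally show False
    by simp
qed

theorem theorem2:
  shows "\<exists>c > 0. \<exists>C > 0. \<forall>\<epsilon>::real. 0 < \<epsilon> \<and> \<epsilon> < 1 \<longrightarrow>
     (\<forall>(A :: nat \<Rightarrow> nat \<Rightarrow> nat \<Rightarrow> qalg) (q :: nat).
        (\<forall>G s t. valid_graph G \<and> expander c G \<and> s < nv G \<and> t < nv G \<longrightarrow>
            success_prob (A (nv G) s t) G s t \<epsilon> q \<ge> 2/3)
        \<longrightarrow> real q \<ge> C / \<epsilon>)"
proof (rule exI[of _ "1/4"], intro conjI exI[of _ "1/40"] allI impI)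
  fix \<epsilon> :: real and A :: "nat \<Rightarrow> nat \<Rightarrow> nat \<Rightarrow> qalg" and q :: nat
  assume \<epsilon>: "0 < \<epsilon> \<and> \<epsilon> < 1"
    and A: "\<forall>G s t. valid_graph G \<and> expander (1/4) G \<and> s < nv G \<and> t < nv G \<longrightarrow>
      success_prob (A (nv G) s t) G s t \<epsilon> q \<ge> 2/3"
  have "estimates_eff_res \<epsilon> (\<lambda>n. A n 0 1) q"
    using A unfolding estimates_eff_res_def success_prob_def approx_set_def by auto
  then have "1 \<le> 40 * real q * \<epsilon>"
    using \<epsilon> estimates_eff_res_queries_pos estimates_eff_res_queries_ge by blast
  then show "real q \<ge> (1/40) / \<epsilon>"
    using \<epsilon> by (simp add: divide_le_eq algebra_simps)
qed simp_all

end
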